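(* $$\pi_{q^m}(\mathrm{MA}_n(\mathbb{F}_q))= \{ \sigma\in \mathrm{Maps}(\mathbb{F}_{q^m}^n,\mathbb{F}_{q^m}^n)~|~ \sigma\phi=\phi\sigma ~\forall~ \phi\in \mathrm{Gal}(\mathbb{F}_{q^m}:\mathbb{F}_q)\}.$$
   Context: $\mathrm{MA}_n(\mathbb{F}_q)$ denotes the set of polynomial maps $F=(F_1,\dots,F_n)$ with $F_i\in\mathbb{F}_q[X_1,\dots,X_n]$, and $\pi_{q^m}(F)$ is the induced map $\mathbb{F}_{q^m}^n\to\mathbb{F}_{q^m}^n$. The Galois group acts on $\mathbb{F}_{q^m}^n$ coordinatewise. *)

theory Defs
  imports Main "HOL-Library.Poly_Mapping"
begin

definition subfield :: "'a::field set \<Rightarrow> bool" where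
  "subfield K \<longleftrightarrow> 0 \<in> K \<and> 1 \<in> K \<and>
     (\<forall>a\<in>K. \<forall>b\<in>K. a + b \<in> K \<and> a * b \<in> K) \<and>
     (\<forall>a\<in>K. - a \<in> K \<and> inverse a \<in> K)"

text \<open>Multivariate polynomials in variables indexed by 'n: finitely supported maps
  from exponent vectors (monomials) to coefficients.\<close>
type_synonym ('n, 'a) mpoly = "('n \<Rightarrow>\<^sub>0 nat) \<Rightarrow>\<^sub>0 'a"

definition mpoly_eval :: "('n::finite, 'a::comm_ring_1) mpoly \<Rightarrow> ('n \<Rightarrow> 'a) \<Rightarrow> 'a" where
  "mpoly_eval p x = (\<Sum>m\<in>Poly_Mapping.keys p. Poly_Mapping.lookup p m * (\<Prod>i\<in>UNIV. x i ^ Poly_Mapping.lookup m i))"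

definition MA :: "'a::comm_ring_1 set \<Rightarrow> ('n \<Rightarrow> ('n, 'a) mpoly) set" where
  "MA K = {F. \<forall>i m. Poly_Mapping.lookup (F i) m \<in> K}"

definition induced_map :: "('n::finite \<Rightarrow> ('n, 'a::comm_ring_1) mpoly) \<Rightarrow> ('n \<Rightarrow> 'a) \<Rightarrow> ('n \<Rightarrow> 'a)" where
  "induced_map F = (\<lambda>x i. mpoly_eval (F i) x)"

definition galois_group :: "'a::field set \<Rightarrow> ('a \<Rightarrow> 'a) set" where
  "galois_group K = {\<phi>. bij \<phi> \<and> (\<forall>a b. \<phi> (a + b) = \<phi> a + \<phi> b) \<and>
      (\<forall>a b. \<phi> (a * b) = \<phi> a * \<phi> b) \<and> \<phi> 1 = 1 \<and> (\<forall>a\<in>K. \<phi> a = a)}"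

end

theory Submission
  imports Defs "HOL-Computational_Algebra.Polynomial" "HOL-Library.FuncSet" "HOL-Library.Cardinality"
begin

text \<open>Polynomials with coefficients in K commute with every automorphism fixing K. Conversely,
  every self-map of L^n for a finite field L is polynomial by Lagrange interpolation, built from the
  indicator 1 - (X - a) ^ (CARD(L) - 1) of a point a. An automorphism \<phi> fixing K merely permutes
  the interpolation nodes, so the coefficients of an equivariant map are fixed by Gal(L : K).
  The fixed field of Gal(L : K) is K itself, because x \<mapsto> x ^ card K belongs to it and fixes only
  the at most card K roots of X ^ card K - X.\<close>

lemma subfield_UNIV: "subfield (UNIV :: 'a::field set)"
  by (simp add: subfield_def)

lemma card_subfield_ge_2:
  fixes K :: "'a::{field,finite} set"
  assumes "subfield K"
  shows "card K \<ge> 2"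
proof -
  have "card {0::'a, 1} \<le> card K"
    using assms by (intro card_mono) (auto simp: subfield_def)
  thus ?thesis by simp
qed

lemma subfield_power_card_minus_one:
  fixes K :: "'a::{field,finite} set"
  assumes K: "subfield K" and a: "a \<in> K" "a \<noteq> 0"
  shows "a ^ (card K - 1) = 1"
proof -
  have "card (K - {0}) = card K - 1"
    using K by (simp add: subfield_def)
  hence "(\<Prod>y\<in>K-{0}. a * y) = a ^ (card K - 1) * \<Prod>(K - {0})"
    by (simp add: prod.distrib)
  moreover have "(\<Prod>y\<in>K-{0}. a * y) = \<Prod>(K - {0})"
    by (rule prod.reindex_bij_witness[of _ "\<lambda>y. y / a" "\<lambda>y. a * y"])
       (use K a in \<open>auto simp: subfield_def divide_inverse mult.commute\<close>)
  ultimately show ?thesis by simp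
qed

lemma subfield_power_card:
  fixes K :: "'a::{field,finite} set"
  assumes K: "subfield K" and a: "a \<in> K"
  shows "a ^ card K = a"
proof -
  obtain k where "card K = Suc k"
    using card_subfield_ge_2[OF K] by (cases "card K") auto
  thus ?thesis
    using subfield_power_card_minus_one[OF K a] by (cases "a = 0") simp_all
qed

lemma poly_eq_0_if_roots_card_gt_degree:
  fixes p :: "'a::idom poly"
  assumes "finite A" "\<And>x. x \<in> A \<Longrightarrow> poly p x = 0" "degree p < card A"
  shows "p = 0"
proof (rule ccontr)
  assume "p \<noteq> 0"
  hence "card A \<le> card {x. poly p x = 0}"
    using assms(2) by (intro card_mono poly_roots_finite) auto
  also have "\<dots> \<le> degree p"
    by (rule card_poly_roots_bound[OF \<open>p \<noteq> 0\<close>])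
  finally show False using assms(3) by simp
qed

lemma degree_linear_power_diff_less:
  fixes c :: "'a::comm_ring_1"
  assumes "q > 0"
  shows "degree ([:c, 1:] ^ q - [:0, 1:] ^ q) < q"
proof -
  let ?D = "[:c, 1:] ^ q - [:0, 1:] ^ q"
  have "degree ?D \<le> q"
    by (rule degree_diff_le) (simp_all add: degree_linear_power)
  moreover have "coeff ?D q = 0"
    by (simp add: coeff_linear_power)
  ultimately show ?thesis
    using assms by (metis leading_coeff_0_iff le_neq_implies_less degree_0)
qed

text \<open>Additivity of x \<mapsto> x ^ card K is proved without the characteristic:
  the polynomial (c + Y) ^ q - c ^ q - Y ^ q has degree below q = card K, so it vanishes
  identically as soon as it vanishes on K. Applied first to c \<in> K, then to arbitrary c.\<close>
lemma subfield_power_card_add: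
  fixes K :: "'a::{field,finite} set" and x y :: 'a
  assumes K: "subfield K"
  shows "(x + y) ^ card K = x ^ card K + y ^ card K"
proof -
  let ?q = "card K"
  have extend: "(c + y) ^ ?q = c ^ ?q + y ^ ?q"
    if on_K: "\<And>b. b \<in> K \<Longrightarrow> (c + b) ^ ?q = c ^ ?q + b ^ ?q" for c y :: 'a
  proof -
    let ?D = "[:c, 1:] ^ ?q - [:0, 1:] ^ ?q - [:c ^ ?q:]"
    have "degree ?D < ?q"
      using card_subfield_ge_2[OF K]
      by (intro degree_diff_less degree_linear_power_diff_less) auto
    moreover have "poly ?D b = 0" if "b \<in> K" for b
      using on_K[OF that] by (simp add: poly_pCons)
    ultimately have "?D = 0"
      by (intro poly_eq_0_if_roots_card_gt_degree[of K]) auto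
    hence "poly ?D y = 0" by simp
    thus ?thesis by (simp add: poly_pCons algebra_simps)
  qed
  have "(b + y) ^ ?q = b ^ ?q + y ^ ?q" if "b \<in> K" for b y
  proof (rule extend)
    fix a assume "a \<in> K"
    with K that show "(b + a) ^ ?q = b ^ ?q + a ^ ?q"
      by (simp add: subfield_power_card subfield_def)
  qed
  hence "(x + b) ^ ?q = x ^ ?q + b ^ ?q" if "b \<in> K" for b
    using that by (simp add: add.commute)
  thus ?thesis by (rule extend)
qed

lemma galois_group_add: "\<phi> \<in> galois_group K \<Longrightarrow> \<phi> (a + b) = \<phi> a + \<phi> b"
  and galois_group_mult: "\<phi> \<in> galois_group K \<Longrightarrow> \<phi> (a * b) = \<phi> a * \<phi> b"
  and galois_group_one: "\<phi> \<in> galois_group K \<Longrightarrow> \<phi> 1 = 1"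
  and galois_group_fixes: "\<phi> \<in> galois_group K \<Longrightarrow> a \<in> K \<Longrightarrow> \<phi> a = a"
  and galois_group_bij: "\<phi> \<in> galois_group K \<Longrightarrow> bij \<phi>"
  by (auto simp: galois_group_def)

lemma galois_group_zero: "\<phi> \<in> galois_group K \<Longrightarrow> \<phi> 0 = 0"
  using galois_group_add[of \<phi> K 0 0] by (metis add_0 add_cancel_left_right)

lemma galois_group_uminus: "\<phi> \<in> galois_group K \<Longrightarrow> \<phi> (- a) = - \<phi> a"
  using galois_group_add[of \<phi> K a "- a"] galois_group_zero[of \<phi> K]
  by (metis add.right_inverse minus_unique)

lemma galois_group_diff: "\<phi> \<in> galois_group K \<Longrightarrow> \<phi> (a - b) = \<phi> a - \<phi> b"
  using galois_group_add[of \<phi> K a "- b"] galois_group_uminus[of \<phi> K b] by simp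

lemma galois_group_power: "\<phi> \<in> galois_group K \<Longrightarrow> \<phi> (a ^ n) = \<phi> a ^ n"
  by (induction n) (simp_all add: galois_group_one galois_group_mult)

lemma galois_group_of_nat: "\<phi> \<in> galois_group K \<Longrightarrow> \<phi> (of_nat n) = of_nat n"
  by (induction n) (simp_all add: galois_group_one galois_group_add galois_group_zero)

lemma galois_group_sum: "\<phi> \<in> galois_group K \<Longrightarrow> \<phi> (sum f A) = (\<Sum>x\<in>A. \<phi> (f x))"
  by (induction A rule: infinite_finite_induct) (simp_all add: galois_group_zero galois_group_add)

lemma galois_group_prod: "\<phi> \<in> galois_group K \<Longrightarrow> \<phi> (prod f A) = (\<Prod>x\<in>A. \<phi> (f x))"
  by (induction A rule: infinite_finite_induct) (simp_all add: galois_group_one galois_group_mult)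

lemma power_card_in_galois_group:
  fixes K :: "'a::{field,finite} set"
  assumes K: "subfield K"
  shows "(\<lambda>x. x ^ card K) \<in> galois_group K"
proof -
  have "inj (\<lambda>x::'a. x ^ card K)"
  proof (rule injI)
    fix x y :: 'a
    assume "x ^ card K = y ^ card K"
    moreover have "x ^ card K = (x - y) ^ card K + y ^ card K"
      using subfield_power_card_add[OF K, of "x - y" y] by simp
    ultimately show "x = y" by simp
  qed
  hence "bij (\<lambda>x::'a. x ^ card K)"
    by (simp add: bij_def finite_UNIV_inj_surj)
  thus ?thesis
    using subfield_power_card_add[OF K] subfield_power_card[OF K]
    by (auto simp: galois_group_def power_mult_distrib)
qed

lemma galois_group_fixed_imp_in_subfield:
  fixes K :: "'a::{field,finite} set"
  assumes K: "subfield K" and fixed: "\<And>\<phi>. \<phi> \<in> galois_group K \<Longrightarrow> \<phi> c = c"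
  shows "c \<in> K"
proof -
  let ?q = "card K"
  let ?P = "monom (1::'a) ?q - [:0, 1:]"
  have q: "?q \<ge> 2" using card_subfield_ge_2[OF K] .
  have "coeff ?P ?q = 1" using q by (simp add: coeff_pCons split: nat.split)
  hence "?P \<noteq> 0" by (metis coeff_0 zero_neq_one)
  have "K \<subseteq> {x. poly ?P x = 0}"
    using subfield_power_card[OF K] by (auto simp: poly_monom)
  moreover have "card {x. poly ?P x = 0} \<le> ?q"
  proof -
    have "degree ?P \<le> ?q"
      using q by (intro degree_diff_le) (simp_all add: degree_monom_le)
    thus ?thesis
      using card_poly_roots_bound[OF \<open>?P \<noteq> 0\<close>] by linarith
  qed
  ultimately have "K = {x. poly ?P x = 0}"
    by (intro card_seteq) auto
  moreover have "poly ?P c = 0"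
    using fixed[OF power_card_in_galois_group[OF K]] by (simp add: poly_monom)
  ultimately show ?thesis by blast
qed

text \<open>delta_coeff e a is the coefficient of X ^ e in 1 - (X - a) ^ (CARD('a) - 1), the
  polynomial function that is 1 at a and 0 elsewhere.\<close>
definition delta_coeff :: "nat \<Rightarrow> 'a::{field,finite} \<Rightarrow> 'a" where
  "delta_coeff e a =
     (if e = 0 then 1 else 0) - of_nat ((CARD('a) - 1) choose e) * (- a) ^ (CARD('a) - 1 - e)"

lemma sum_delta_coeff:
  fixes a x :: "'a::{field,finite}"
  shows "(\<Sum>e<CARD('a). delta_coeff e a * x ^ e) = (if x = a then 1 else 0)"
proof -
  define d where "d = CARD('a) - 1"
  have d: "CARD('a) = Suc d" "d \<ge> 1"
    using card_subfield_ge_2[OF subfield_UNIV, where 'a='a] by (simp_all add: d_def)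
  have "(\<Sum>e<CARD('a). delta_coeff e a * x ^ e)
      = (\<Sum>e\<le>d. (if e = 0 then 1 else 0) * x ^ e) - (\<Sum>e\<le>d. of_nat (d choose e) * x ^ e * (- a) ^ (d - e))"
    unfolding sum_subtractf[symmetric] d(1) lessThan_Suc_atMost
    by (rule sum.cong) (simp_all add: delta_coeff_def d(1) algebra_simps)
  also have "(\<Sum>e\<le>d. (if e = 0 then 1 else 0) * x ^ e) = 1"
    by (induction d) auto
  also have "(\<Sum>e\<le>d. of_nat (d choose e) * x ^ e * (- a) ^ (d - e)) = (x - a) ^ d"
    using binomial_ring[of x "- a" d] by simp
  finally show ?thesis
    using subfield_power_card_minus_one[OF subfield_UNIV, of "x - a"] d(2) by (auto simp: d_def)
qed

lemma galois_group_delta_coeff: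
  "\<phi> \<in> galois_group K \<Longrightarrow> \<phi> (delta_coeff e a) = delta_coeff e (\<phi> a)"
  unfolding delta_coeff_def
  by (simp add: galois_group_diff galois_group_mult galois_group_power galois_group_uminus
      galois_group_of_nat galois_group_one galois_group_zero)

lemma lookup_Abs_poly_mapping_lookup:
  fixes c :: "('n::finite \<Rightarrow> nat) \<Rightarrow> 'a::zero"
  assumes "finite S" "\<And>e. e \<notin> S \<Longrightarrow> c e = 0"
  shows "Poly_Mapping.lookup (Abs_poly_mapping (\<lambda>m. c (Poly_Mapping.lookup m))) = (\<lambda>m. c (Poly_Mapping.lookup m))"
proof -
  have "{m. c (Poly_Mapping.lookup m) \<noteq> 0} \<subseteq> Poly_Mapping.lookup -` S"
    using assms(2) by blast
  moreover have "finite (Poly_Mapping.lookup -` S :: ('n \<Rightarrow>\<^sub>0 nat) set)"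
    using assms(1) by (rule finite_vimageI) (auto simp: inj_def)
  ultimately show ?thesis
    by (simp add: finite_subset)
qed

lemma mpoly_eval_Abs_poly_mapping_lookup:
  fixes c :: "('n::finite \<Rightarrow> nat) \<Rightarrow> 'a::comm_ring_1"
  assumes S: "finite S" "\<And>e. e \<notin> S \<Longrightarrow> c e = 0"
  shows "mpoly_eval (Abs_poly_mapping (\<lambda>m. c (Poly_Mapping.lookup m))) x
           = (\<Sum>e\<in>S. c e * (\<Prod>j\<in>UNIV. x j ^ e j))"
proof -
  let ?p = "Abs_poly_mapping (\<lambda>m. c (Poly_Mapping.lookup m))"
  let ?g = "\<lambda>e. c e * (\<Prod>j\<in>UNIV. x j ^ e j)"
  have lookup_p: "Poly_Mapping.lookup ?p = (\<lambda>m. c (Poly_Mapping.lookup m))"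
    by (rule lookup_Abs_poly_mapping_lookup[OF S])
  have inj: "inj (Poly_Mapping.lookup :: ('n \<Rightarrow>\<^sub>0 nat) \<Rightarrow> _)"
    by (auto simp: inj_def)
  have "mpoly_eval ?p x = (\<Sum>m\<in>Poly_Mapping.keys ?p. ?g (Poly_Mapping.lookup m))"
    by (simp add: mpoly_eval_def lookup_p)
  also have "\<dots> = (\<Sum>e\<in>Poly_Mapping.lookup ` Poly_Mapping.keys ?p. ?g e)"
    by (simp add: sum.reindex inj_on_subset[OF inj])
  also have "\<dots> = (\<Sum>e\<in>S. ?g e)"
  proof (rule sum.mono_neutral_left[OF S(1)])
    show "Poly_Mapping.lookup ` Poly_Mapping.keys ?p \<subseteq> S"
      using S(2) by (force simp: in_keys_iff lookup_p)
    show "\<forall>e\<in>S - Poly_Mapping.lookup ` Poly_Mapping.keys ?p. ?g e = 0"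
    proof
      fix e assume e: "e \<in> S - Poly_Mapping.lookup ` Poly_Mapping.keys ?p"
      have "c e = 0"
      proof (rule ccontr)
        assume "c e \<noteq> 0"
        hence "Abs_poly_mapping e \<in> Poly_Mapping.keys ?p"
          by (simp add: in_keys_iff lookup_p)
        hence "e \<in> Poly_Mapping.lookup ` Poly_Mapping.keys ?p"
          by (rule rev_image_eqI) simp
        with e show False by blast
      qed
      thus "?g e = 0" by simp
    qed
  qed
  finally show ?thesis .
qed

lemma galois_group_mpoly_eval:
  assumes "\<phi> \<in> galois_group K" "\<And>m. Poly_Mapping.lookup p m \<in> K"
  shows "\<phi> (mpoly_eval p x) = mpoly_eval p (\<phi> \<circ> x)"
  using assms unfolding mpoly_eval_def
  by (simp add: galois_group_sum galois_group_mult galois_group_prod galois_group_power galois_group_fixes)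

text \<open>interpolation_poly f is the expansion of \<Sum>a. f a * (\<Prod>j. 1 - (X j - a j) ^ (CARD('a) - 1)),
  whose exponents all lie below CARD('a).\<close>
definition interpolation_coeff :: "(('n::finite \<Rightarrow> 'a) \<Rightarrow> 'a) \<Rightarrow> ('n \<Rightarrow> nat) \<Rightarrow> 'a::{field,finite}" where
  "interpolation_coeff f e =
     (if e \<in> PiE UNIV (\<lambda>_. {..<CARD('a)})
      then \<Sum>a\<in>UNIV. f a * (\<Prod>j\<in>UNIV. delta_coeff (e j) (a j)) else 0)"

definition interpolation_poly :: "(('n::finite \<Rightarrow> 'a) \<Rightarrow> 'a) \<Rightarrow> ('n, 'a::{field,finite}) mpoly" where
  "interpolation_poly f = Abs_poly_mapping (\<lambda>m. interpolation_coeff f (Poly_Mapping.lookup m))"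

lemma lookup_interpolation_poly:
  "Poly_Mapping.lookup (interpolation_poly f) m = interpolation_coeff f (Poly_Mapping.lookup m)"
  unfolding interpolation_poly_def
  by (subst lookup_Abs_poly_mapping_lookup[of "PiE UNIV (\<lambda>_. {..<CARD(_)})"])
     (auto simp: interpolation_coeff_def intro: finite_PiE)

lemma mpoly_eval_interpolation_poly:
  fixes f :: "('n::finite \<Rightarrow> 'a::{field,finite}) \<Rightarrow> 'a"
  shows "mpoly_eval (interpolation_poly f) x = f x"
proof -
  let ?B = "PiE UNIV (\<lambda>_::'n. {..<CARD('a)})"
  have "mpoly_eval (interpolation_poly f) x = (\<Sum>e\<in>?B. interpolation_coeff f e * (\<Prod>j\<in>UNIV. x j ^ e j))"
    unfolding interpolation_poly_def
    by (rule mpoly_eval_Abs_poly_mapping_lookup) (auto simp: interpolation_coeff_def intro: finite_PiE)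
  also have "\<dots> = (\<Sum>e\<in>?B. (\<Sum>a\<in>UNIV. f a * (\<Prod>j\<in>UNIV. delta_coeff (e j) (a j))) * (\<Prod>j\<in>UNIV. x j ^ e j))"
    by (rule sum.cong) (simp_all add: interpolation_coeff_def)
  also have "\<dots> = (\<Sum>a\<in>UNIV. f a * (\<Sum>e\<in>?B. \<Prod>j\<in>UNIV. delta_coeff (e j) (a j) * x j ^ e j))"
    by (simp add: sum_distrib_left sum_distrib_right sum.swap[of _ ?B] prod.distrib mult.assoc)
  also have "\<dots> = (\<Sum>a\<in>UNIV. f a * (\<Prod>j\<in>UNIV. \<Sum>t<CARD('a). delta_coeff t (a j) * x j ^ t))"
    by (simp add: prod_sum_PiE)
  also have "\<dots> = (\<Sum>a\<in>UNIV. f a * (\<Prod>j\<in>UNIV. if x j = a j then 1 else 0))"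
    by (simp add: sum_delta_coeff)
  also have "\<dots> = (\<Sum>a\<in>UNIV. if a = x then f a else 0)"
  proof (rule sum.cong[OF refl])
    fix a :: "'n \<Rightarrow> 'a"
    show "f a * (\<Prod>j\<in>UNIV. if x j = a j then 1 else 0) = (if a = x then f a else 0)"
    proof (cases "a = x")
      case False
      then obtain j where "x j \<noteq> a j" by (metis ext)
      hence "(\<Prod>j\<in>UNIV. if x j = a j then 1 else (0::'a)) = 0" by (intro prod_zero) auto
      thus ?thesis using False by simp
    qed simp
  qed
  also have "\<dots> = f x" by simp
  finally show ?thesis .
qed

lemma interpolation_coeff_in_subfield:
  fixes K :: "'a::{field,finite} set" and f :: "('n::finite \<Rightarrow> 'a) \<Rightarrow> 'a"
  assumes K: "subfield K"
    and equivariant: "\<And>\<phi> a. \<phi> \<in> galois_group K \<Longrightarrow> f (\<phi> \<circ> a) = \<phi> (f a)"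
  shows "interpolation_coeff f e \<in> K"
proof (cases "e \<in> PiE UNIV (\<lambda>_. {..<CARD('a)})")
  case False
  thus ?thesis using K by (simp add: interpolation_coeff_def subfield_def)
next
  case True
  let ?g = "\<lambda>a. f a * (\<Prod>j\<in>UNIV. delta_coeff (e j) (a j))"
  have "(\<Sum>a\<in>UNIV. ?g a) \<in> K"
  proof (rule galois_group_fixed_imp_in_subfield[OF K])
    fix \<phi> assume \<phi>: "\<phi> \<in> galois_group K"
    have "\<phi> (\<Sum>a\<in>UNIV. ?g a) = (\<Sum>a\<in>UNIV. ?g (\<phi> \<circ> a))"
      using \<phi> by (simp add: galois_group_sum galois_group_mult galois_group_prod
          galois_group_delta_coeff equivariant)
    also have "\<dots> = (\<Sum>a\<in>UNIV. ?g a)"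
      using galois_group_bij[OF \<phi>]
      by (intro sum.reindex_bij_witness[of _ "\<lambda>a. inv \<phi> \<circ> a" "\<lambda>a. \<phi> \<circ> a"])
         (auto simp: fun_eq_iff bij_is_inj bij_is_surj surj_f_inv_f)
    finally show "\<phi> (\<Sum>a\<in>UNIV. ?g a) = (\<Sum>a\<in>UNIV. ?g a)" .
  qed
  thus ?thesis using True by (simp add: interpolation_coeff_def)
qed

lemma induced_map_galois_equivariant:
  assumes "F \<in> MA K" "\<phi> \<in> galois_group K"
  shows "induced_map F (\<phi> \<circ> x) = \<phi> \<circ> induced_map F x"
  using assms by (simp add: fun_eq_iff induced_map_def MA_def galois_group_mpoly_eval)

lemma galois_equivariant_in_induced_maps:
  fixes K :: "'a::{field,finite} set" and \<sigma> :: "('n::finite \<Rightarrow> 'a) \<Rightarrow> ('n \<Rightarrow> 'a)"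
  assumes K: "subfield K"
    and equivariant: "\<And>\<phi> x. \<phi> \<in> galois_group K \<Longrightarrow> \<sigma> (\<phi> \<circ> x) = \<phi> \<circ> \<sigma> x"
  shows "\<sigma> \<in> induced_map ` MA K"
proof -
  let ?F = "\<lambda>i. interpolation_poly (\<lambda>x. \<sigma> x i)"
  have "?F \<in> MA K"
    using equivariant
    by (auto simp: MA_def lookup_interpolation_poly intro!: interpolation_coeff_in_subfield[OF K])
  moreover have "\<sigma> = induced_map ?F"
    by (simp add: fun_eq_iff induced_map_def mpoly_eval_interpolation_poly)
  ultimately show ?thesis by blast
qed

theorem mainTheorem6:
  fixes K :: "'a::{field,finite} set"
  assumes "subfield K"
  shows "(induced_map :: ('n::finite \<Rightarrow> ('n, 'a) mpoly) \<Rightarrow> _) ` MA K =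
         {\<sigma> :: ('n \<Rightarrow> 'a) \<Rightarrow> ('n \<Rightarrow> 'a).
            \<forall>\<phi>\<in>galois_group K. \<forall>x. \<sigma> (\<phi> \<circ> x) = \<phi> \<circ> \<sigma> x}"
  using induced_map_galois_equivariant galois_equivariant_in_induced_maps[OF assms]
  by blast

end
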